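(* Let $G$ be a finite graph, $F$ a normal spanning forest of $G$, $x$ a vertex of $G$, and $B\subseteq\mathrm{Pred}_F(x)$. Let $p,d\in\mathbb{N}$. (a) If $|B|\ge p$ and there are $p$ distinct immediate successors $y$ of $x$ in $F$ with $B_F(y)=B\cup\{x\}$, then $K_{p,p}$ is a minor of $G$. (b) If $|B|<p$ and $\mathrm{Sep}(G,p)\le d$, then there are at most $d$ immediate successors $y$ of $x$ in $F$ with $B_F(y)=B\cup\{x\}$.
   Context: Graphs are finite, simple, undirected. A spanning forest $F$ of $G$ is a rooted forest on the vertex set of $G$ using edges of $G$, with edges oriented away from the roots; its tree-order is $x\preceq_F y$ iff some path from a root to $y$ contains $x$; immediate successors of $x$ are the children of $x$ in $F$. $F$ is normal if the two ends of every edge of $G$ are $\preceq_F$-comparable. $\mathrm{Pred}_F(x)=\{y: y\prec_F x\}$. $B_F(x)=\{v\prec_F x : \text{there is an edge }(u,v)\text{ of }G\text{ with }x\preceq_F u\}$. $\mathrm{Sep}(G,k)$ is the maximum over vertex sets $S$ with $|S|\le k$ of the number of connected components of $G-S$. *)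

theory Defs
  imports Main
begin

definition graph :: "'a set \<Rightarrow> ('a \<Rightarrow> 'a \<Rightarrow> bool) \<Rightarrow> bool" where
  "graph V E \<longleftrightarrow> finite V \<and> (\<forall>u v. E u v \<longrightarrow> u \<in> V \<and> v \<in> V \<and> E v u \<and> u \<noteq> v)"

definition induced_rel :: "('a \<Rightarrow> 'a \<Rightarrow> bool) \<Rightarrow> 'a set \<Rightarrow> ('a \<times> 'a) set" where
  "induced_rel E W = {(a, b). a \<in> W \<and> b \<in> W \<and> E a b}"

definition conn_in :: "('a \<Rightarrow> 'a \<Rightarrow> bool) \<Rightarrow> 'a set \<Rightarrow> 'a \<Rightarrow> 'a \<Rightarrow> bool" where
  "conn_in E W u v \<longleftrightarrow> u \<in> W \<and> v \<in> W \<and> (u, v) \<in> (induced_rel E W)\<^sup>*"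

definition components :: "('a \<Rightarrow> 'a \<Rightarrow> bool) \<Rightarrow> 'a set \<Rightarrow> 'a set set" where
  "components E W = {{v. conn_in E W u v} | u. u \<in> W}"

definition connected_set :: "('a \<Rightarrow> 'a \<Rightarrow> bool) \<Rightarrow> 'a set \<Rightarrow> bool" where
  "connected_set E W \<longleftrightarrow> W \<noteq> {} \<and> (\<forall>u\<in>W. \<forall>v\<in>W. conn_in E W u v)"

definition Sep :: "'a set \<Rightarrow> ('a \<Rightarrow> 'a \<Rightarrow> bool) \<Rightarrow> nat \<Rightarrow> nat" where
  "Sep V E k = Max {card (components E (V - S)) | S. S \<subseteq> V \<and> card S \<le> k}"

definition Kpp_minor :: "'a set \<Rightarrow> ('a \<Rightarrow> 'a \<Rightarrow> bool) \<Rightarrow> nat \<Rightarrow> bool" where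
  "Kpp_minor V E p \<longleftrightarrow> (\<exists>A B :: nat \<Rightarrow> 'a set.
     (\<forall>i<p. A i \<subseteq> V \<and> B i \<subseteq> V \<and> connected_set E (A i) \<and> connected_set E (B i)) \<and>
     (\<forall>i<p. \<forall>j<p. i \<noteq> j \<longrightarrow> A i \<inter> A j = {} \<and> B i \<inter> B j = {}) \<and>
     (\<forall>i<p. \<forall>j<p. A i \<inter> B j = {}) \<and>
     (\<forall>i<p. \<forall>j<p. \<exists>a\<in>A i. \<exists>b\<in>B j. E a b))"

text \<open>A rooted spanning forest is given by a parent function: par v = Some u means u is the
  parent of v (edge uv of G oriented away from the root); roots have par v = None.\<close>
definition parent_rel :: "('a \<Rightarrow> 'a option) \<Rightarrow> ('a \<times> 'a) set" where
  "parent_rel par = {(u, v). par v = Some u}"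

definition spanning_forest :: "'a set \<Rightarrow> ('a \<Rightarrow> 'a \<Rightarrow> bool) \<Rightarrow> ('a \<Rightarrow> 'a option) \<Rightarrow> bool" where
  "spanning_forest V E par \<longleftrightarrow>
     (\<forall>u v. par v = Some u \<longrightarrow> v \<in> V \<and> u \<in> V \<and> E u v) \<and> acyclic (parent_rel par)"

definition tree_le :: "('a \<Rightarrow> 'a option) \<Rightarrow> 'a \<Rightarrow> 'a \<Rightarrow> bool" where
  "tree_le par x y \<longleftrightarrow> (x, y) \<in> (parent_rel par)\<^sup>*"

definition tree_lt :: "('a \<Rightarrow> 'a option) \<Rightarrow> 'a \<Rightarrow> 'a \<Rightarrow> bool" where
  "tree_lt par x y \<longleftrightarrow> tree_le par x y \<and> x \<noteq> y"

definition normal_forest :: "'a set \<Rightarrow> ('a \<Rightarrow> 'a \<Rightarrow> bool) \<Rightarrow> ('a \<Rightarrow> 'a option) \<Rightarrow> bool" where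
  "normal_forest V E par \<longleftrightarrow> spanning_forest V E par \<and>
     (\<forall>u v. E u v \<longrightarrow> tree_le par u v \<or> tree_le par v u)"

definition Pred :: "('a \<Rightarrow> 'a option) \<Rightarrow> 'a \<Rightarrow> 'a set" where
  "Pred par x = {y. tree_lt par y x}"

definition BF :: "('a \<Rightarrow> 'a \<Rightarrow> bool) \<Rightarrow> ('a \<Rightarrow> 'a option) \<Rightarrow> 'a \<Rightarrow> 'a set" where
  "BF E par x = {v. tree_lt par v x \<and> (\<exists>u. E u v \<and> tree_le par x u)}"

end

theory Submission
  imports Defs
begin

text \<open>For a child y of x, the subtree of y is connected, and normality of F means every edge
  leaving it ends in B_F(y), a subset of the predecessors of y. Hence the subtree of y is a
  component of G - B_F(y). In (a) the subtrees of the p children together with p singletons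
  from B are the branch sets of a K_{p,p} minor. In (b) the subtrees of the children with
  B_F(y) = B \<union> {x} are distinct components of G - (B \<union> {x}), a set of at most p vertices.\<close>

definition subtree :: "('a \<Rightarrow> 'a option) \<Rightarrow> 'a \<Rightarrow> 'a set" where
  "subtree par y = {u. tree_le par y u}"

lemma parent_rel_edge:
  "spanning_forest V E par \<Longrightarrow> (u, v) \<in> parent_rel par \<Longrightarrow> u \<in> V \<and> v \<in> V \<and> E u v"
  by (auto simp: spanning_forest_def parent_rel_def)

lemma tree_le_in_V:
  assumes "spanning_forest V E par" "tree_le par a u" "a \<in> V"
  shows "u \<in> V"
  using assms(2,3) unfolding tree_le_def
  by (induction rule: rtrancl_induct) (auto dest: parent_rel_edge[OF assms(1)])

lemma tree_lt_in_V:
  assumes "spanning_forest V E par" "tree_lt par a u"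
  shows "a \<in> V"
proof -
  from assms(2) obtain w where "(a, w) \<in> parent_rel par"
    unfolding tree_lt_def tree_le_def by (metis converse_rtranclE)
  then show ?thesis using parent_rel_edge[OF assms(1)] by blast
qed

lemma tree_le_below_linear:
  assumes "tree_le par a u" "tree_le par b u"
  shows "tree_le par a b \<or> tree_le par b a"
  using assms unfolding tree_le_def
proof (induction arbitrary: b rule: rtrancl_induct)
  case base
  then show ?case by simp
next
  case (step w u)
  show ?case
  proof (cases "b = u")
    case True
    then show ?thesis using step.hyps by auto
  next
    case False
    with step.prems obtain w' where "(b, w') \<in> (parent_rel par)\<^sup>*" "(w', u) \<in> parent_rel par"
      by (metis rtranclE)
    moreover from this(2) step.hyps(2) have "w' = w" by (auto simp: parent_rel_def)
    ultimately show ?thesis using step.IH by auto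
  qed
qed

lemma tree_le_antisym:
  assumes "spanning_forest V E par" "tree_le par a b" "tree_le par b a"
  shows "a = b"
proof (rule ccontr)
  assume "a \<noteq> b"
  with assms(2) have "(a, b) \<in> (parent_rel par)\<^sup>+"
    unfolding tree_le_def by (simp add: rtrancl_eq_or_trancl)
  then have "(a, a) \<in> (parent_rel par)\<^sup>+"
    using assms(3) unfolding tree_le_def by (rule trancl_rtrancl_trancl)
  with assms(1) show False unfolding spanning_forest_def acyclic_def by blast
qed

lemma tree_lt_child:
  assumes "spanning_forest V E par" "par y = Some x" "tree_le par b x"
  shows "tree_lt par b y"
proof -
  have "(x, y) \<in> parent_rel par" using assms(2) by (simp add: parent_rel_def)
  then have "tree_le par b y" "tree_le par x y"
    using assms(3) unfolding tree_le_def by auto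
  moreover have "x \<noteq> y"
    using assms(1) \<open>(x, y) \<in> parent_rel par\<close> unfolding spanning_forest_def acyclic_def by auto
  ultimately show ?thesis
    using tree_le_antisym[OF assms(1)] assms(3) unfolding tree_lt_def tree_le_def
    by (metis rtrancl_trans)
qed

lemma children_tree_le_eq:
  assumes "spanning_forest V E par" "par a = Some x" "par b = Some x" "tree_le par a b"
  shows "a = b"
proof (rule ccontr)
  assume "a \<noteq> b"
  with assms(4) obtain w where "tree_le par a w" "(w, b) \<in> parent_rel par"
    unfolding tree_le_def by (metis rtranclE)
  moreover from this(2) assms(3) have "w = x" by (simp add: parent_rel_def)
  ultimately have "tree_lt par a a" using tree_lt_child[OF assms(1,2)] by blast
  then show False by (simp add: tree_lt_def)
qed

lemma subtrees_of_children_disjoint: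
  assumes "spanning_forest V E par" "par a = Some x" "par b = Some x" "a \<noteq> b"
  shows "subtree par a \<inter> subtree par b = {}"
proof (rule ccontr)
  assume "subtree par a \<inter> subtree par b \<noteq> {}"
  then obtain u where "tree_le par a u" "tree_le par b u" unfolding subtree_def by blast
  then have "tree_le par a b \<or> tree_le par b a" by (rule tree_le_below_linear)
  then show False using children_tree_le_eq[OF assms(1)] assms(2-4) by metis
qed

lemma subtree_subset_V:
  "spanning_forest V E par \<Longrightarrow> y \<in> V \<Longrightarrow> subtree par y \<subseteq> V"
  unfolding subtree_def by (auto intro: tree_le_in_V)

lemma BF_disjoint_subtree:
  "spanning_forest V E par \<Longrightarrow> BF E par y \<inter> subtree par y = {}"
  unfolding BF_def subtree_def tree_lt_def by (auto dest: tree_le_antisym)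

lemma conn_in_mono: "conn_in E W u v \<Longrightarrow> W \<subseteq> W' \<Longrightarrow> conn_in E W' u v"
proof -
  assume "conn_in E W u v" "W \<subseteq> W'"
  moreover from this(2) have "induced_rel E W \<subseteq> induced_rel E W'"
    by (auto simp: induced_rel_def)
  ultimately show ?thesis by (auto simp: conn_in_def intro: rtrancl_mono[THEN subsetD])
qed

lemma conn_in_sym: "graph V E \<Longrightarrow> conn_in E W u v \<Longrightarrow> conn_in E W v u"
proof -
  assume "graph V E" "conn_in E W u v"
  moreover from this(1) have "(induced_rel E W)\<inverse> = induced_rel E W"
    by (auto simp: induced_rel_def graph_def)
  ultimately show ?thesis unfolding conn_in_def by (metis rtrancl_converseI)
qed

lemma conn_in_trans: "conn_in E W u v \<Longrightarrow> conn_in E W v w \<Longrightarrow> conn_in E W u w"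
  unfolding conn_in_def by auto

lemma conn_in_subtree:
  assumes "spanning_forest V E par" "tree_le par y u"
  shows "conn_in E (subtree par y) y u"
  using assms(2) unfolding tree_le_def
proof (induction rule: rtrancl_induct)
  case base
  then show ?case by (simp add: conn_in_def subtree_def tree_le_def)
next
  case (step w u)
  then have "(w, u) \<in> induced_rel E (subtree par y)"
    using parent_rel_edge[OF assms(1) step(2)]
    by (auto simp: induced_rel_def subtree_def tree_le_def intro: rtrancl_into_rtrancl)
  moreover have "u \<in> subtree par y"
    using step.hyps by (simp add: subtree_def tree_le_def)
  ultimately show ?case using step.IH by (auto simp: conn_in_def intro: rtrancl_into_rtrancl)
qed

lemma connected_set_subtree:
  assumes "graph V E" "spanning_forest V E par"
  shows "connected_set E (subtree par y)"
  unfolding connected_set_def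
proof (intro conjI ballI)
  show "subtree par y \<noteq> {}" by (auto simp: subtree_def tree_le_def)
  fix u v assume "u \<in> subtree par y" "v \<in> subtree par y"
  then have "conn_in E (subtree par y) y u" "conn_in E (subtree par y) y v"
    using conn_in_subtree[OF assms(2)] by (auto simp: subtree_def)
  then show "conn_in E (subtree par y) u v"
    using conn_in_sym[OF assms(1)] conn_in_trans by metis
qed

lemma connected_set_singleton: "connected_set E {v}"
  by (simp add: connected_set_def conn_in_def)

lemma subtree_in_components:
  assumes normal: "normal_forest V E par" and "y \<in> V"
  shows "subtree par y \<in> components E (V - BF E par y)"
proof -
  let ?W = "V - BF E par y"
  have sf: "spanning_forest V E par" using normal by (simp add: normal_forest_def)
  have sub: "subtree par y \<subseteq> ?W"
    using subtree_subset_V[OF sf \<open>y \<in> V\<close>] BF_disjoint_subtree[OF sf] by blast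
  have y: "y \<in> subtree par y" by (simp add: subtree_def tree_le_def)
  have "subtree par y = {v. conn_in E ?W y v}"
  proof (intro equalityI subsetI CollectI)
    fix v assume "v \<in> subtree par y"
    then show "conn_in E ?W y v"
      using conn_in_subtree[OF sf] conn_in_mono[OF _ sub] by (simp add: subtree_def)
  next
    fix v assume "v \<in> {v. conn_in E ?W y v}"
    then have "(y, v) \<in> (induced_rel E ?W)\<^sup>*" by (simp add: conn_in_def)
    then show "v \<in> subtree par y"
    proof (induction rule: rtrancl_induct)
      case base
      show ?case by (rule y)
    next
      case (step w v)
      then have wv: "E w v" "v \<notin> BF E par y" and yw: "tree_le par y w"
        by (auto simp: induced_rel_def subtree_def)
      from normal wv(1) have "tree_le par w v \<or> tree_le par v w"
        by (simp add: normal_forest_def)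
      then show ?case
      proof
        assume "tree_le par w v"
        with yw show ?thesis unfolding subtree_def tree_le_def by auto
      next
        assume "tree_le par v w"
        \<comment> \<open>v is comparable with y, and being a proper ancestor of y would put v into B_F(y)\<close>
        then have "tree_le par v y \<or> tree_le par y v" using yw by (rule tree_le_below_linear)
        moreover have "\<not> tree_lt par v y" using wv yw by (auto simp: BF_def)
        ultimately show ?thesis using y by (auto simp: subtree_def tree_lt_def)
      qed
    qed
  qed
  moreover have "y \<in> ?W" using sub y by blast
  ultimately show ?thesis unfolding components_def by blast
qed

lemma finite_components: "graph V E \<Longrightarrow> W \<subseteq> V \<Longrightarrow> finite (components E W)"
  unfolding graph_def components_def conn_in_def
  by (rule finite_subset[of _ "Pow V"]) auto

lemma card_components_le_Sep:
  assumes "graph V E" "S \<subseteq> V" "card S \<le> k"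
  shows "card (components E (V - S)) \<le> Sep V E k"
proof -
  have "{card (components E (V - S)) | S. S \<subseteq> V \<and> card S \<le> k}
          \<subseteq> (\<lambda>S. card (components E (V - S))) ` Pow V" by blast
  then have "finite {card (components E (V - S)) | S. S \<subseteq> V \<and> card S \<le> k}"
    using assms(1) by (auto simp: graph_def intro: finite_subset)
  then show ?thesis unfolding Sep_def using assms(2,3) by (blast intro: Max_ge)
qed

lemma card_children_with_BF_le_components:
  assumes "graph V E" "normal_forest V E par"
  shows "card {y. par y = Some x \<and> BF E par y = S} \<le> card (components E (V - S))"
proof -
  let ?C = "{y. par y = Some x \<and> BF E par y = S}"
  have sf: "spanning_forest V E par" using assms(2) by (simp add: normal_forest_def)
  have "subtree par ` ?C \<subseteq> components E (V - S)"
  proof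
    fix T assume "T \<in> subtree par ` ?C"
    then obtain y where "T = subtree par y" "par y = Some x" "BF E par y = S" by blast
    moreover have "y \<in> V" using \<open>par y = Some x\<close> sf by (simp add: spanning_forest_def)
    ultimately show "T \<in> components E (V - S)" using subtree_in_components[OF assms(2)] by metis
  qed
  moreover have "inj_on (subtree par) ?C"
  proof (rule inj_onI)
    fix y y' assume "y \<in> ?C" "y' \<in> ?C" "subtree par y = subtree par y'"
    then show "y = y'"
      using children_tree_le_eq[OF sf] by (auto simp: subtree_def tree_le_def)
  qed
  moreover have "finite (components E (V - S))" using finite_components[OF assms(1)] by blast
  ultimately show ?thesis by (meson card_inj_on_le)
qed

lemma Kpp_minorI:
  assumes "p \<le> card Y" "p \<le> card Z" "Z \<subseteq> V"
    and branch: "\<And>y. y \<in> Y \<Longrightarrow> A y \<subseteq> V \<and> connected_set E (A y) \<and> A y \<inter> Z = {}"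
    and disjoint: "\<And>y y'. y \<in> Y \<Longrightarrow> y' \<in> Y \<Longrightarrow> y \<noteq> y' \<Longrightarrow> A y \<inter> A y' = {}"
    and edges: "\<And>y z. y \<in> Y \<Longrightarrow> z \<in> Z \<Longrightarrow> \<exists>a\<in>A y. E a z"
  shows "Kpp_minor V E p"
proof -
  obtain Y' where Y': "Y' \<subseteq> Y" "card Y' = p" "finite Y'"
    using obtain_subset_with_card_n[OF assms(1)] by blast
  obtain Z' where Z': "Z' \<subseteq> Z" "card Z' = p" "finite Z'"
    using obtain_subset_with_card_n[OF assms(2)] by blast
  obtain f where f: "bij_betw f {0..<p} Y'" using ex_bij_betw_nat_finite[OF Y'(3)] Y'(2) by blast
  obtain g where g: "bij_betw g {0..<p} Z'" using ex_bij_betw_nat_finite[OF Z'(3)] Z'(2) by blast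
  have fY: "f i \<in> Y" and gZ: "g i \<in> Z" if "i < p" for i
    using that bij_betwE[OF f] bij_betwE[OF g] Y'(1) Z'(1) by auto
  have f_inj: "f i \<noteq> f j" and g_inj: "g i \<noteq> g j" if "i < p" "j < p" "i \<noteq> j" for i j
    using that inj_onD[OF bij_betw_imp_inj_on[OF f]] inj_onD[OF bij_betw_imp_inj_on[OF g]] by auto
  show ?thesis unfolding Kpp_minor_def
  proof (rule exI[of _ "\<lambda>i. A (f i)"], rule exI[of _ "\<lambda>i. {g i}"], intro conjI allI impI)
    fix i assume "i < p"
    then show "A (f i) \<subseteq> V" "connected_set E (A (f i))"
      using branch[OF fY] by simp_all
    show "{g i} \<subseteq> V" using gZ[OF \<open>i < p\<close>] assms(3) by blast
    show "connected_set E {g i}" by (rule connected_set_singleton)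
  next
    fix i j assume "i < p" "j < p"
    then show "A (f i) \<inter> {g j} = {}" "\<exists>a\<in>A (f i). \<exists>b\<in>{g j}. E a b"
      using branch[OF fY[OF \<open>i < p\<close>]] edges[OF fY gZ] gZ by auto
    assume "i \<noteq> j"
    with \<open>i < p\<close> \<open>j < p\<close> show "A (f i) \<inter> A (f j) = {}" "{g i} \<inter> {g j} = {}"
      using disjoint[OF fY fY f_inj] g_inj by auto
  qed
qed

theorem lemma4p11:
  fixes V :: "'a set" and E :: "'a \<Rightarrow> 'a \<Rightarrow> bool" and par :: "'a \<Rightarrow> 'a option"
    and x :: 'a and B :: "'a set" and p d :: nat
  assumes "graph V E"
    and "normal_forest V E par"
    and "x \<in> V"
    and "B \<subseteq> Pred par x"
  shows "(card B \<ge> p \<and>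
          (\<exists>Y. card Y = p \<and> (\<forall>y\<in>Y. par y = Some x \<and> BF E par y = insert x B))
            \<longrightarrow> Kpp_minor V E p)
       \<and> (card B < p \<and> Sep V E p \<le> d
            \<longrightarrow> card {y. par y = Some x \<and> BF E par y = insert x B} \<le> d)"
proof -
  have sf: "spanning_forest V E par" using assms(2) by (simp add: normal_forest_def)
  have BV: "B \<subseteq> V" using assms(4) tree_lt_in_V[OF sf] by (auto simp: Pred_def)
  have childV: "y \<in> V" if "par y = Some x" for y using that sf by (simp add: spanning_forest_def)
  have "Kpp_minor V E p"
    if "p \<le> card B" "card Y = p" and Y: "\<forall>y\<in>Y. par y = Some x \<and> BF E par y = insert x B" for Y
  proof (rule Kpp_minorI[of p Y B V "subtree par"])
    fix y assume "y \<in> Y"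
    with Y have "par y = Some x" "B \<subseteq> BF E par y" by auto
    then show "subtree par y \<subseteq> V \<and> connected_set E (subtree par y) \<and> subtree par y \<inter> B = {}"
      using subtree_subset_V[OF sf childV] connected_set_subtree[OF assms(1) sf]
        BF_disjoint_subtree[OF sf] by blast
    show "\<exists>a\<in>subtree par y. E a b" if "b \<in> B" for b
      using \<open>B \<subseteq> BF E par y\<close> that by (auto simp: BF_def subtree_def)
  qed (use that BV subtrees_of_children_disjoint[OF sf] in auto)
  moreover have "card {y. par y = Some x \<and> BF E par y = insert x B} \<le> d"
    if "card B < p" "Sep V E p \<le> d"
  proof -
    have "finite B" using BV assms(1) by (auto simp: graph_def intro: finite_subset)
    then have "card (insert x B) \<le> p" using that(1) by (simp add: card_insert_if)
    then show ?thesis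
      using card_children_with_BF_le_components[OF assms(1,2)]
        card_components_le_Sep[OF assms(1)] BV assms(3) that(2)
      by (meson insert_subset le_trans)
  qed
  ultimately show ?thesis by blast
qed

end
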